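(* Let $k$ and $\tau$ be integers with $k \ge 1$ and $1 \le \tau \le k$. Let $G$ be obtained from a complete bipartite graph with bipartition $(A,B)$, where $|A| \ge 4k$ and $|B| \ge 4k$, by adding all edges among some set of $2k-1$ vertices of $A$ (forming a clique) and all edges among some set $T$ of $\tau$ vertices of $B$. Let $S \subseteq B$ be a set of $k$ vertices with $T \subseteq S$. Then $\tau(G[S]) = \tau - 1$, $G$ does not contain $k$ pairwise vertex-disjoint odd $S$-cycles, and there is no set $X$ of at most $2k-3+\tau(G[S])$ vertices such that $G - X$ is bipartite.
   Context: All graphs are finite and simple. An $S$-cycle is a cycle containing at least one vertex of $S$. For a graph $H$, $\tau(H)$ denotes the vertex cover number of $H$ (minimum size of a vertex set meeting every edge). *)

theory Defs
  imports Main
begin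

text \<open>A graph is given by a vertex set V and an edge relation E (assumed symmetric
and irreflexive where relevant).  All notions below only use edges between vertices of V.\<close>

definition is_cycle :: "'a set \<Rightarrow> ('a \<Rightarrow> 'a \<Rightarrow> bool) \<Rightarrow> 'a list \<Rightarrow> bool" where
  "is_cycle V E xs \<longleftrightarrow> length xs \<ge> 3 \<and> distinct xs \<and> set xs \<subseteq> V \<and>
     (\<forall>i < length xs. E (xs ! i) (xs ! ((i + 1) mod length xs)))"

definition is_odd_S_cycle :: "'a set \<Rightarrow> ('a \<Rightarrow> 'a \<Rightarrow> bool) \<Rightarrow> 'a set \<Rightarrow> 'a list \<Rightarrow> bool" where
  "is_odd_S_cycle V E S xs \<longleftrightarrow> is_cycle V E xs \<and> odd (length xs) \<and> set xs \<inter> S \<noteq> {}"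

definition is_vertex_cover :: "'a set \<Rightarrow> ('a \<Rightarrow> 'a \<Rightarrow> bool) \<Rightarrow> 'a set \<Rightarrow> bool" where
  "is_vertex_cover V E X \<longleftrightarrow> X \<subseteq> V \<and> (\<forall>u\<in>V. \<forall>v\<in>V. E u v \<longrightarrow> u \<in> X \<or> v \<in> X)"

text \<open>Vertex cover number of the (finite) graph (V,E); the induced subgraph G[S]
  is represented as (S,E) for S \<subseteq> V.\<close>
definition vc_number :: "'a set \<Rightarrow> ('a \<Rightarrow> 'a \<Rightarrow> bool) \<Rightarrow> nat" where
  "vc_number V E = Min {card X | X. is_vertex_cover V E X}"

definition bipartite :: "'a set \<Rightarrow> ('a \<Rightarrow> 'a \<Rightarrow> bool) \<Rightarrow> bool" where
  "bipartite V E \<longleftrightarrow> (\<exists>P \<subseteq> V. \<forall>u\<in>V. \<forall>v\<in>V. E u v \<longrightarrow> (u \<in> P \<longleftrightarrow> v \<notin> P))"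

end

theory Submission
  imports Defs
begin

text \<open>The edges of G[S] are exactly those of the clique T, and a vertex cover of a clique
  misses at most one of its vertices; so \<open>\<tau>(G[S]) = \<tau> - 1\<close>.
  An odd cycle must use an edge on one side of the bipartition (A, B), i.e.\ an edge of the
  clique on C or of the clique on T \<subseteq> S. Hence each odd S-cycle meets S twice, or meets
  S once and C twice; weighting S-vertices by 2 and C-vertices by 1, every odd S-cycle has
  weight at least 4, while the total weight is 2k + (2k - 1) < 4k.
  Finally, deleting fewer than 4k vertices leaves a vertex on each side, which is a common
  neighbour of the clique on the other side; a bipartite graph contains no triangle, so at
  most one vertex of C and of T survives, and at least (2k - 2) + (\<tau> - 1) vertices are deleted.\<close>

definition clique :: "('a \<Rightarrow> 'a \<Rightarrow> bool) \<Rightarrow> 'a set \<Rightarrow> bool" where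
  "clique E K \<longleftrightarrow> (\<forall>u\<in>K. \<forall>v\<in>K. u \<noteq> v \<longrightarrow> E u v)"

lemma card_le_1_if_all_eq:
  assumes "\<And>u v. u \<in> K \<Longrightarrow> v \<in> K \<Longrightarrow> u = v"
  shows "card K \<le> 1"
  using assms card_le_Suc0_iff_eq[of K] by (cases "finite K") auto

lemma two_le_card:
  assumes "finite K" "u \<in> K" "v \<in> K" "u \<noteq> v"
  shows "2 \<le> card K"
proof -
  have "card {u, v} \<le> card K" using assms by (intro card_mono) auto
  then show ?thesis using \<open>u \<noteq> v\<close> by simp
qed

lemma vertex_cover_clique_card_Diff_le_1:
  assumes "is_vertex_cover V E X" "K \<subseteq> V" "clique E K"
  shows "card (K - X) \<le> 1"
  using assms unfolding is_vertex_cover_def clique_def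
  by (intro card_le_1_if_all_eq) blast

lemma vc_number_clique:
  assumes "finite V" "K \<subseteq> V" "K \<noteq> {}"
    and edges: "\<And>u v. u \<in> V \<Longrightarrow> v \<in> V \<Longrightarrow> E u v \<longleftrightarrow> u \<in> K \<and> v \<in> K \<and> u \<noteq> v"
  shows "vc_number V E = card K - 1"
proof -
  have "clique E K" using assms unfolding clique_def by blast
  obtain x where "x \<in> K" using assms(3) by blast
  have finK: "finite K" using assms(1,2) finite_subset by blast
  have cover: "is_vertex_cover V E (K - {x})"
    using assms(2) edges unfolding is_vertex_cover_def by blast
  have lower: "card K - 1 \<le> card X" if "is_vertex_cover V E X" for X
  proof -
    have "finite X" using that assms(1) finite_subset unfolding is_vertex_cover_def by blast
    then have "card (K \<inter> X) \<le> card X" by (simp add: card_mono)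
    moreover have "card (K - X) \<le> 1"
      using vertex_cover_clique_card_Diff_le_1 that assms(2) \<open>clique E K\<close> .
    ultimately show ?thesis using card_Int_Diff[OF finK, of X] by linarith
  qed
  have "finite {card X | X. is_vertex_cover V E X}"
  proof (rule finite_subset)
    show "{card X | X. is_vertex_cover V E X} \<subseteq> card ` Pow V"
      unfolding is_vertex_cover_def by auto
  qed (use assms(1) in simp)
  moreover have "card K - 1 \<in> {card X | X. is_vertex_cover V E X}"
    using cover card_Diff_singleton[OF \<open>x \<in> K\<close>] by force
  ultimately show ?thesis
    unfolding vc_number_def using lower by (intro Min_eqI) auto
qed

lemma bipartite_no_triangle:
  assumes "bipartite V E" "u \<in> V" "v \<in> V" "w \<in> V" "E u v" "E u w" "E v w"
  shows False
  using assms unfolding bipartite_def by blast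

lemma bipartite_clique_common_neighbour_card_le_1:
  assumes "bipartite V E" "K \<subseteq> V" "clique E K" "w \<in> V" "\<And>u. u \<in> K \<Longrightarrow> E u w"
  shows "card K \<le> 1"
proof (rule card_le_1_if_all_eq, rule ccontr)
  fix u v assume "u \<in> K" "v \<in> K" "u \<noteq> v"
  then show False
    using bipartite_no_triangle[OF assms(1), of u v w] assms(2-5) unfolding clique_def by blast
qed

lemma odd_cyclic_list_adjacent_agree:
  fixes P :: "'a \<Rightarrow> bool"
  assumes "odd (length xs)"
  shows "\<exists>i<length xs. P (xs ! i) = P (xs ! ((i + 1) mod length xs))"
proof (rule ccontr)
  define n where "n = length xs"
  assume "\<not> ?thesis"
  then have alternate: "P (xs ! i) \<noteq> P (xs ! ((i + 1) mod n))" if "i < n" for i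
    using that unfolding n_def by auto
  have parity: "P (xs ! i) = (P (xs ! 0) \<noteq> odd i)" if "i < n" for i
    using that
  proof (induction i)
    case (Suc i)
    then show ?case using alternate[of i] by simp
  qed simp
  have "n \<ge> 1" "even (n - 1)" using assms unfolding n_def by (cases "length xs"; simp)+
  then show False using alternate[of "n - 1"] parity[of "n - 1"] by simp
qed

lemma odd_cycle_edge_same_side:
  assumes "is_cycle V E xs" "odd (length xs)"
  obtains u v where "u \<in> set xs" "v \<in> set xs" "u \<noteq> v" "E u v" "u \<in> A \<longleftrightarrow> v \<in> A"
proof -
  define n where "n = length xs"
  have n: "n \<ge> 3" "distinct xs" and steps: "\<forall>i<n. E (xs ! i) (xs ! ((i + 1) mod n))"
    using assms(1) unfolding is_cycle_def n_def by auto
  obtain i where i: "i < n" "xs ! i \<in> A \<longleftrightarrow> xs ! ((i + 1) mod n) \<in> A"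
    using odd_cyclic_list_adjacent_agree[OF assms(2), of "\<lambda>x. x \<in> A"] unfolding n_def by blast
  define j where "j = (i + 1) mod n"
  have "j < n" using n(1) unfolding j_def by simp
  have "j \<noteq> i" using i(1) n(1) unfolding j_def by (cases "i + 1 = n") auto
  then have "xs ! i \<noteq> xs ! j"
    using nth_eq_iff_index_eq[OF n(2)] i(1) \<open>j < n\<close> unfolding n_def by auto
  then show thesis
    using that[of "xs ! i" "xs ! j"] i steps \<open>j < n\<close> unfolding j_def n_def by auto
qed

lemma odd_S_cycle_weight:
  assumes "is_odd_S_cycle V E S xs"
    and within_A: "\<And>u v. E u v \<Longrightarrow> u \<in> A \<Longrightarrow> v \<in> A \<Longrightarrow> u \<in> C \<and> v \<in> C"
    and outside_A: "\<And>u v. E u v \<Longrightarrow> u \<in> V - A \<Longrightarrow> v \<in> V - A \<Longrightarrow> u \<in> S \<and> v \<in> S"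
  shows "4 \<le> 2 * card (set xs \<inter> S) + card (set xs \<inter> C)"
proof -
  have cyc: "is_cycle V E xs" "odd (length xs)" and "set xs \<inter> S \<noteq> {}"
    using assms(1) unfolding is_odd_S_cycle_def by auto
  then have meets_S: "1 \<le> card (set xs \<inter> S)" by (simp add: Suc_leI card_gt_0_iff)
  have "set xs \<subseteq> V" using cyc(1) unfolding is_cycle_def by simp
  obtain u v where uv: "u \<in> set xs" "v \<in> set xs" "u \<noteq> v" "E u v" "u \<in> A \<longleftrightarrow> v \<in> A"
    using odd_cycle_edge_same_side[OF cyc] by blast
  show ?thesis
  proof (cases "u \<in> A")
    case True
    then have "u \<in> C" "v \<in> C" using within_A uv by auto
    then have "2 \<le> card (set xs \<inter> C)" using two_le_card uv by (metis IntI finite_Int finite_set)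
    then show ?thesis using meets_S by linarith
  next
    case False
    then have "u \<in> S" "v \<in> S" using outside_A uv \<open>set xs \<subseteq> V\<close> by blast+
    then have "2 \<le> card (set xs \<inter> S)" using two_le_card uv by (metis IntI finite_Int finite_set)
    then show ?thesis by linarith
  qed
qed

lemma sum_card_Int_disjoint_le:
  assumes "finite I" "finite S"
    and disjoint: "\<And>i j. i \<in> I \<Longrightarrow> j \<in> I \<Longrightarrow> i \<noteq> j \<Longrightarrow> F i \<inter> F j = {}"
  shows "(\<Sum>i\<in>I. card (F i \<inter> S)) \<le> card S"
proof -
  have "(\<Sum>i\<in>I. card (F i \<inter> S)) = card (\<Union>i\<in>I. F i \<inter> S)"
    using assms by (intro card_UN_disjoint[symmetric]) auto
  also have "\<dots> \<le> card S" using assms(2) by (intro card_mono) auto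
  finally show ?thesis .
qed

lemma disjoint_family_weight_bound:
  assumes "finite I" "finite S" "finite C"
    and disjoint: "\<And>i j. i \<in> I \<Longrightarrow> j \<in> I \<Longrightarrow> i \<noteq> j \<Longrightarrow> F i \<inter> F j = {}"
    and weight: "\<And>i. i \<in> I \<Longrightarrow> w \<le> 2 * card (F i \<inter> S) + card (F i \<inter> C)"
  shows "w * card I \<le> 2 * card S + card C"
proof -
  have "w * card I \<le> (\<Sum>i\<in>I. 2 * card (F i \<inter> S) + card (F i \<inter> C))"
    using sum_mono[OF weight, of I] by (simp add: mult.commute)
  also have "\<dots> = 2 * (\<Sum>i\<in>I. card (F i \<inter> S)) + (\<Sum>i\<in>I. card (F i \<inter> C))"
    by (simp add: sum.distrib sum_distrib_left)
  also have "\<dots> \<le> 2 * card S + card C"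
    using sum_card_Int_disjoint_le[of I S F] sum_card_Int_disjoint_le[of I C F] assms(1-3) disjoint
    by (simp add: add_mono)
  finally show ?thesis .
qed

lemma odd_S_cycle_packing_bound:
  assumes "finite S" "finite C"
    and within_A: "\<And>u v. E u v \<Longrightarrow> u \<in> A \<Longrightarrow> v \<in> A \<Longrightarrow> u \<in> C \<and> v \<in> C"
    and outside_A: "\<And>u v. E u v \<Longrightarrow> u \<in> V - A \<Longrightarrow> v \<in> V - A \<Longrightarrow> u \<in> S \<and> v \<in> S"
    and odd: "\<forall>i < k. is_odd_S_cycle V E S (cyc i)"
    and disjoint: "\<forall>i < k. \<forall>j < k. i \<noteq> j \<longrightarrow> set (cyc i) \<inter> set (cyc j) = {}"
  shows "4 * k \<le> 2 * card S + card C"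
proof -
  have "4 \<le> 2 * card (set (cyc i) \<inter> S) + card (set (cyc i) \<inter> C)" if "i < k" for i
    using odd that odd_S_cycle_weight[of V E S "cyc i" A C] within_A outside_A by blast
  then show ?thesis
    using disjoint assms(1,2) disjoint_family_weight_bound[of "{..<k}" S C "\<lambda>i. set (cyc i)" 4]
    by auto
qed

lemma bipartite_deletion_two_cliques:
  assumes "bipartite (V - X) E" "finite X" "finite C" "finite T" "C \<inter> T = {}"
    and "C \<subseteq> V" "T \<subseteq> V" "clique E C" "clique E T"
    and "a \<in> V - X" "b \<in> V - X" "\<And>u. u \<in> C \<Longrightarrow> E u b" "\<And>u. u \<in> T \<Longrightarrow> E u a"
  shows "card C + card T \<le> card X + 2"
proof -
  have "clique E (C - X)" "clique E (T - X)" using assms(8,9) unfolding clique_def by auto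
  then have "card (C - X) \<le> 1" "card (T - X) \<le> 1"
    using bipartite_clique_common_neighbour_card_le_1[OF assms(1), of "C - X" b]
      bipartite_clique_common_neighbour_card_le_1[OF assms(1), of "T - X" a]
      assms(6,7,10-13) by auto
  moreover have "card (C \<inter> X) + card (T \<inter> X) \<le> card X"
  proof -
    have "card (C \<inter> X) + card (T \<inter> X) = card ((C \<inter> X) \<union> (T \<inter> X))"
      using assms(3-5) by (intro card_Un_disjoint[symmetric]) auto
    also have "\<dots> \<le> card X" using assms(2) by (intro card_mono) auto
    finally show ?thesis .
  qed
  ultimately show ?thesis
    using card_Int_Diff[OF assms(3), of X] card_Int_Diff[OF assms(4), of X] by linarith
qed

theorem mainTheorem9:
  fixes A B C T S :: "'a set" and k t :: nat and E :: "'a \<Rightarrow> 'a \<Rightarrow> bool"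
  assumes "k \<ge> 1" and "1 \<le> t" and "t \<le> k"
    and "finite A" and "finite B" and "A \<inter> B = {}"
    and "card A \<ge> 4 * k" and "card B \<ge> 4 * k"
    and "C \<subseteq> A" and "card C = 2 * k - 1"
    and "T \<subseteq> B" and "card T = t"
    and "S \<subseteq> B" and "card S = k" and "T \<subseteq> S"
    and E_def: "\<And>x y. E x y \<longleftrightarrow>
        (x \<in> A \<and> y \<in> B) \<or> (x \<in> B \<and> y \<in> A) \<or>
        (x \<in> C \<and> y \<in> C \<and> x \<noteq> y) \<or> (x \<in> T \<and> y \<in> T \<and> x \<noteq> y)"
  shows "vc_number S E = t - 1 \<and>
       \<not> (\<exists>cyc :: nat \<Rightarrow> 'a list.
              (\<forall>i < k. is_odd_S_cycle (A \<union> B) E S (cyc i)) \<and>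
              (\<forall>i < k. \<forall>j < k. i \<noteq> j \<longrightarrow> set (cyc i) \<inter> set (cyc j) = {})) \<and>
       \<not> (\<exists>X \<subseteq> A \<union> B. int (card X) \<le> 2 * int k - 3 + int (vc_number S E) \<and>
              bipartite (A \<union> B - X) E)"
proof (intro conjI notI)
  have fin: "finite S" "finite T" "finite C" using assms(4,5,9,11,13) finite_subset by blast+
  have "clique E C" "clique E T" unfolding clique_def using E_def by auto
  have edges_S: "E u v \<longleftrightarrow> u \<in> T \<and> v \<in> T \<and> u \<noteq> v" if "u \<in> S" "v \<in> S" for u v
    using that E_def assms(6,9,13) by auto
  have "T \<noteq> {}" using assms(2,12) by auto
  show vc: "vc_number S E = t - 1"
    using vc_number_clique[OF fin(1) assms(15) \<open>T \<noteq> {}\<close> edges_S] assms(12) by simp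
  have within_A: "u \<in> C \<and> v \<in> C" if "E u v" "u \<in> A" "v \<in> A" for u v
    using that E_def assms(6,11) by auto
  have outside_A: "u \<in> S \<and> v \<in> S" if "E u v" "u \<in> A \<union> B - A" "v \<in> A \<union> B - A" for u v
    using that E_def assms(9,15) by auto
  show False if "\<exists>cyc. (\<forall>i < k. is_odd_S_cycle (A \<union> B) E S (cyc i)) \<and>
      (\<forall>i < k. \<forall>j < k. i \<noteq> j \<longrightarrow> set (cyc i) \<inter> set (cyc j) = {})"
  proof -
    from that obtain cyc where "\<forall>i < k. is_odd_S_cycle (A \<union> B) E S (cyc i)"
      "\<forall>i < k. \<forall>j < k. i \<noteq> j \<longrightarrow> set (cyc i) \<inter> set (cyc j) = {}" by blast
    then have "4 * k \<le> 2 * card S + card C"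
      using odd_S_cycle_packing_bound[of S C E A "A \<union> B"] fin within_A outside_A by blast
    then show False using assms(1,10,14) by simp
  qed
  show False if "\<exists>X \<subseteq> A \<union> B. int (card X) \<le> 2 * int k - 3 + int (vc_number S E) \<and>
      bipartite (A \<union> B - X) E"
  proof -
    from that obtain X where X: "X \<subseteq> A \<union> B" "int (card X) \<le> 2 * int k - 3 + int (t - 1)"
      "bipartite (A \<union> B - X) E" unfolding vc by blast
    have "finite X" using X(1) assms(4,5) finite_subset by blast
    have "card X < card A" "card X < card B" using X(2) assms(1-3,7,8) by linarith+
    then obtain a b where "a \<in> A - X" "b \<in> B - X"
      using card_mono[OF \<open>finite X\<close>, of A] card_mono[OF \<open>finite X\<close>, of B] by fastforce
    then have "card C + card T \<le> card X + 2"
      using fin assms(6,9,11) \<open>clique E C\<close> \<open>clique E T\<close> E_def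
      by (intro bipartite_deletion_two_cliques[OF X(3) \<open>finite X\<close>, of _ _ a b]) auto
    then show False using X(2) assms(1,2,10,12) by linarith
  qed
qed

end
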